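(* Let $d\ge2$, $A\in\mathcal C^{d-1}$ and $C\in\mathcal C^d_A$. Then for every $a\in[0,\tfrac12]$, $$\mu_A\Big(\big\{\mathbf x\in\mathbb I^{d-1}: |r_C(\mathbf x)-\tfrac12|\ge a\big\}\Big)\le\min\{1,\,2-4a\}.$$
   Context: $\mathbb I=[0,1]$, $\lambda$ Lebesgue measure. A $d$-copula $C\in\mathcal C^d$ is the distribution function on $\mathbb I^d$ of a probability measure $\mu_C$ with uniform univariate marginals; points are $(\mathbf x,y)$, $\mathbf x\in\mathbb I^{d-1}$. $C_{1:(d-1)}$ is the marginal copula of the first $d-1$ coordinates. For $A\in\mathcal C^{d-1}$, $\mathcal C^d_A=\{C\in\mathcal C^d: C_{1:(d-1)}=A\}$; for $d=2$, $\mu_A=\lambda$ and $\mathcal C^2_A=\mathcal C^2$. $K_C$ is the Markov kernel of $C$ w.r.t. the first $d-1$ coordinates: $\mu_C(B\times F)=\int_B K_C(\mathbf x,F)\,\mathrm d\mu_{C_{1:(d-1)}}(\mathbf x)$. Regression function $r_C(\mathbf x)=\int y\,K_C(\mathbf x,\mathrm dy)$. *)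

theory Defs
  imports "HOL-Probability.Probability"
begin

text \<open>Points of \<open>\<real>^d\<close> are pairs \<open>(x, y)\<close> with \<open>x :: real^'n\<close>, so \<open>d - 1 = CARD('n) \<ge> 1\<close>.
  A copula is identified with its probability measure \<open>\<mu>_C\<close>.\<close>

definition unit_cube :: "(real^'n::finite) set" where
  "unit_cube = {x. \<forall>i. 0 \<le> x$i \<and> x$i \<le> 1}"

definition copula_measure :: "(real^'n::finite) measure \<Rightarrow> bool" where
  "copula_measure M \<longleftrightarrow> prob_space M \<and> sets M = sets (borel :: (real^'n::finite) measure) \<and>
     (\<forall>i. distr M borel (\<lambda>x. x$i) = uniform_measure lborel {0..1::real})"

definition dcopula_measure :: "((real^'n::finite) \<times> real) measure \<Rightarrow> bool" where
  "dcopula_measure M \<longleftrightarrow> prob_space M \<and> sets M = sets (borel :: ((real^'n::finite) \<times> real) measure) \<and>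
     (\<forall>i. distr M borel (\<lambda>p. fst p $ i) = uniform_measure lborel {0..1::real}) \<and>
     distr M borel snd = uniform_measure lborel {0..1::real}"

definition markov_kernel_of ::
  "('a \<times> real) measure \<Rightarrow> 'a measure \<Rightarrow> ('a \<Rightarrow> real measure) \<Rightarrow> bool" where
  "markov_kernel_of M MA K \<longleftrightarrow>
     (\<forall>x. prob_space (K x) \<and> sets (K x) = sets (borel :: real measure)) \<and>
     (\<forall>F\<in>sets borel. (\<lambda>x. measure (K x) F) \<in> borel_measurable MA) \<and>
     (\<forall>B\<in>sets MA. \<forall>F\<in>sets borel.
        emeasure M (B \<times> F) = (\<integral>\<^sup>+x. emeasure (K x) F * indicator B x \<partial>MA))"

definition regression :: "('a \<Rightarrow> real measure) \<Rightarrow> 'a \<Rightarrow> real" where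
  "regression K x = (\<integral>y. y \<partial>(K x))"

end

theory Submission
  imports Defs
begin

text \<open>Integrating the kernels \<open>K x\<close> against \<open>\<mu>\<^sub>A\<close> gives the law of the last coordinate,
  the uniform distribution on \<open>[0,1]\<close>. Let \<open>S\<close> be a set of mass \<open>p\<close> on which \<open>r\<^sub>C \<ge> t\<close>. Since
  \<open>y \<le> c + (y - c)\<^sup>+\<close> with \<open>c = 1 - p\<close>, integrating over \<open>S\<close> gives
  \<open>(t - c) p \<le> \<integral>\<^sub>0\<^sup>1 (y - c)\<^sup>+ dy = p\<^sup>2/2\<close>, i.e. \<open>p \<le> 2(1 - t)\<close>. Symmetrically, a set of mass \<open>q\<close>
  on which \<open>r\<^sub>C \<le> s\<close> satisfies \<open>q \<le> 2s\<close>. With \<open>t = 1/2 + a\<close> and \<open>s = 1/2 - a\<close> the two tails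
  have mass at most \<open>1 - 2a\<close> each.\<close>

lemma nn_integral_uniform_pos_part:
  fixes c :: real
  assumes "0 \<le> c" "c \<le> 1"
  shows "(\<integral>\<^sup>+y. ennreal (max (y - c) 0) \<partial>uniform_measure lborel {0..1}) = ennreal ((1 - c)^2 / 2)"
proof -
  have "(\<integral>\<^sup>+y. ennreal (max (y - c) 0) \<partial>uniform_measure lborel {0..1})
      = (\<integral>\<^sup>+y. ennreal (max (y - c) 0) * indicator {0..1} y \<partial>lborel)"
    by (subst nn_integral_uniform_measure) (auto simp: divide_ennreal_def)
  also have "\<dots> = (\<integral>\<^sup>+y. ennreal (y - c) * indicator {c..1} y \<partial>lborel)"
    using assms by (intro nn_integral_cong) (auto simp: ennreal_neg split: split_indicator)
  also have "\<dots> = ennreal ((1 - c)^2 / 2)"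
    using assms by (subst nn_integral_FTC_Icc[where F = "\<lambda>y. (y - c)^2 / 2"])
      (auto intro!: derivative_eq_intros)
  finally show ?thesis .
qed

lemma nn_integral_uniform_neg_part:
  fixes c :: real
  assumes "0 \<le> c" "c \<le> 1"
  shows "(\<integral>\<^sup>+y. ennreal (max (c - y) 0) \<partial>uniform_measure lborel {0..1}) = ennreal (c^2 / 2)"
proof -
  have "(\<integral>\<^sup>+y. ennreal (max (c - y) 0) \<partial>uniform_measure lborel {0..1})
      = (\<integral>\<^sup>+y. ennreal (max (c - y) 0) * indicator {0..1} y \<partial>lborel)"
    by (subst nn_integral_uniform_measure) (auto simp: divide_ennreal_def)
  also have "\<dots> = (\<integral>\<^sup>+y. ennreal (c - y) * indicator {0..c} y \<partial>lborel)"
    using assms by (intro nn_integral_cong) (auto simp: ennreal_neg split: split_indicator)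
  also have "\<dots> = ennreal (c^2 / 2)"
    using assms by (subst nn_integral_FTC_Icc[where F = "\<lambda>y. c * y - y^2 / 2"])
      (auto intro!: derivative_eq_intros simp: power2_eq_square)
  finally show ?thesis .
qed

lemma integral_diff_le_nn_integral_pos_part:
  fixes f :: "'a \<Rightarrow> real"
  assumes "prob_space M" and f: "integrable M f"
  shows "ennreal ((\<integral>x. f x \<partial>M) - c) \<le> (\<integral>\<^sup>+x. ennreal (max (f x - c) 0) \<partial>M)"
proof -
  interpret prob_space M by fact
  have pos_part: "integrable M (\<lambda>x. max (f x - c) 0)"
    using f by (intro integrable_max) auto
  have "(\<integral>x. f x \<partial>M) - c = (\<integral>x. f x - c \<partial>M)"
    using f by (simp add: prob_space)
  also have "\<dots> \<le> (\<integral>x. max (f x - c) 0 \<partial>M)"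
    using f pos_part by (intro integral_mono) auto
  finally have "ennreal ((\<integral>x. f x \<partial>M) - c) \<le> ennreal (\<integral>x. max (f x - c) 0 \<partial>M)"
    by (rule ennreal_leI)
  also have "\<dots> = (\<integral>\<^sup>+x. ennreal (max (f x - c) 0) \<partial>M)"
    using pos_part by (rule nn_integral_eq_integral[symmetric]) auto
  finally show ?thesis .
qed

lemma emeasure_mult_le_nn_integral_bind:
  assumes K: "K \<in> M \<rightarrow>\<^sub>M subprob_algebra N" and S: "S \<in> sets M" and g: "g \<in> borel_measurable N"
    and bound: "AE x in M. x \<in> S \<longrightarrow> t \<le> (\<integral>\<^sup>+y. g y \<partial>K x)"
  shows "t * emeasure M S \<le> (\<integral>\<^sup>+y. g y \<partial>(M \<bind> K))"
proof -
  have "t * emeasure M S = (\<integral>\<^sup>+x. t * indicator S x \<partial>M)"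
    using S by (simp add: nn_integral_cmult_indicator)
  also have "\<dots> \<le> (\<integral>\<^sup>+x. \<integral>\<^sup>+y. g y \<partial>K x \<partial>M)"
    using bound by (intro nn_integral_mono_AE) (auto split: split_indicator)
  also have "\<dots> = (\<integral>\<^sup>+y. g y \<partial>(M \<bind> K))"
    using g K by (rule nn_integral_bind[symmetric])
  finally show ?thesis .
qed

lemma two_mul_le_of_ennreal_mult_le_half_square:
  fixes u p :: real
  assumes le: "ennreal u * ennreal p \<le> ennreal (p^2 / 2)" and "0 \<le> p" and "u \<le> p"
  shows "2 * u \<le> p"
proof (cases "0 < u \<and> 0 < p")
  case True
  then have "u * p \<le> p^2 / 2"
    using le by (simp add: ennreal_mult[symmetric] ennreal_le_iff)
  with True show ?thesis
    by (simp add: power2_eq_square)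
qed (use assms in auto)

locale uniform_mixture = prob_space M for M :: "'a measure" +
  fixes K :: "'a \<Rightarrow> real measure"
  assumes kernel: "K \<in> M \<rightarrow>\<^sub>M prob_algebra borel"
    and bind_eq_uniform: "M \<bind> K = uniform_measure lborel {0..1}"
begin

lemma kernel_subprob_algebra: "K \<in> M \<rightarrow>\<^sub>M subprob_algebra borel"
  using kernel by (rule measurable_prob_algebraD)

lemma prob_space_kernel: "x \<in> space M \<Longrightarrow> prob_space (K x)"
  using measurable_space[OF kernel] by (simp add: space_prob_algebra)

lemma borel_measurable_regression: "regression K \<in> borel_measurable M"
  unfolding regression_def
  using measurable_compose[OF kernel_subprob_algebra integral_measurable_subprob_algebra[of "\<lambda>y. y" borel]]
  by simp

lemma AE_integrable_kernel: "AE x in M. integrable (K x) (\<lambda>y. y)"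
proof -
  have "AE y in M \<bind> K. y \<in> {0..1::real}"
    unfolding bind_eq_uniform by (rule AE_uniform_measureI) auto
  then have "AE x in M. AE y in K x. y \<in> {0..1}"
    by (simp add: AE_bind[OF kernel_subprob_algebra])
  with AE_space show ?thesis
  proof eventually_elim
    case (elim x)
    have "finite_measure (K x)"
      using elim prob_space_kernel by (simp add: prob_space_def)
    then show ?case
      using elim sets_kernel[OF kernel_subprob_algebra, of x]
      by (intro finite_measure.integrable_const_bound[where B = 1]) (auto cong: measurable_cong_sets)
  qed
qed

lemma measure_regression_ge_le:
  assumes S: "S \<in> sets M" and "t \<le> 1" and ge: "AE x in M. x \<in> S \<longrightarrow> t \<le> regression K x"
  shows "measure M S \<le> 2 * (1 - t)"
proof -
  define p where "p = measure M S"
  have "AE x in M. x \<in> S \<longrightarrow> ennreal (t - (1 - p)) \<le> (\<integral>\<^sup>+y. ennreal (max (y - (1 - p)) 0) \<partial>K x)"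
    using ge AE_integrable_kernel AE_space
  proof eventually_elim
    case (elim x)
    show ?case
    proof
      assume "x \<in> S"
      then have "ennreal (t - (1 - p)) \<le> ennreal (regression K x - (1 - p))"
        using elim by (intro ennreal_leI) auto
      also have "\<dots> \<le> (\<integral>\<^sup>+y. ennreal (max (y - (1 - p)) 0) \<partial>K x)"
        unfolding regression_def using elim prob_space_kernel
        by (intro integral_diff_le_nn_integral_pos_part) auto
      finally show "ennreal (t - (1 - p)) \<le> (\<integral>\<^sup>+y. ennreal (max (y - (1 - p)) 0) \<partial>K x)" .
    qed
  qed
  then have "ennreal (t - (1 - p)) * emeasure M S \<le> (\<integral>\<^sup>+y. ennreal (max (y - (1 - p)) 0) \<partial>(M \<bind> K))"
    by (intro emeasure_mult_le_nn_integral_bind[OF kernel_subprob_algebra S]) auto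
  also have "\<dots> = ennreal (p^2 / 2)"
    unfolding bind_eq_uniform p_def by (subst nn_integral_uniform_pos_part) auto
  finally have "ennreal (t - (1 - p)) * ennreal p \<le> ennreal (p^2 / 2)"
    by (simp add: p_def emeasure_eq_measure)
  then have "2 * (t - (1 - p)) \<le> p"
    by (rule two_mul_le_of_ennreal_mult_le_half_square) (use \<open>t \<le> 1\<close> in \<open>auto simp: p_def\<close>)
  then show ?thesis
    by (simp add: p_def)
qed

lemma measure_regression_le_le:
  assumes S: "S \<in> sets M" and "0 \<le> s" and le: "AE x in M. x \<in> S \<longrightarrow> regression K x \<le> s"
  shows "measure M S \<le> 2 * s"
proof -
  define q where "q = measure M S"
  have "AE x in M. x \<in> S \<longrightarrow> ennreal (q - s) \<le> (\<integral>\<^sup>+y. ennreal (max (q - y) 0) \<partial>K x)"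
    using le AE_integrable_kernel AE_space
  proof eventually_elim
    case (elim x)
    show ?case
    proof
      assume "x \<in> S"
      then have "ennreal (q - s) \<le> ennreal (q - regression K x)"
        using elim by (intro ennreal_leI) auto
      also have "\<dots> \<le> (\<integral>\<^sup>+y. ennreal (max (q - y) 0) \<partial>K x)"
        using integral_diff_le_nn_integral_pos_part[of "K x" uminus "- q"] elim prob_space_kernel
        by (simp add: regression_def)
      finally show "ennreal (q - s) \<le> (\<integral>\<^sup>+y. ennreal (max (q - y) 0) \<partial>K x)" .
    qed
  qed
  then have "ennreal (q - s) * emeasure M S \<le> (\<integral>\<^sup>+y. ennreal (max (q - y) 0) \<partial>(M \<bind> K))"
    by (intro emeasure_mult_le_nn_integral_bind[OF kernel_subprob_algebra S]) auto
  also have "\<dots> = ennreal (q^2 / 2)"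
    unfolding bind_eq_uniform q_def by (subst nn_integral_uniform_neg_part) auto
  finally have "ennreal (q - s) * ennreal q \<le> ennreal (q^2 / 2)"
    by (simp add: q_def emeasure_eq_measure)
  then have "2 * (q - s) \<le> q"
    by (rule two_mul_le_of_ennreal_mult_le_half_square) (use \<open>0 \<le> s\<close> in \<open>auto simp: q_def\<close>)
  then show ?thesis
    by (simp add: q_def)
qed

end

lemma markov_kernel_of_measurable:
  assumes "markov_kernel_of M MA K"
  shows "K \<in> MA \<rightarrow>\<^sub>M prob_algebra borel"
proof (intro measurable_prob_algebraI measurable_subprob_algebra)
  fix F :: "real set"
  assume "F \<in> sets borel"
  with assms have "(\<lambda>x. ennreal (measure (K x) F)) \<in> borel_measurable MA"
    by (simp add: markov_kernel_of_def)
  then show "(\<lambda>x. emeasure (K x) F) \<in> borel_measurable MA"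
    using assms by (simp add: markov_kernel_of_def prob_space_def finite_measure.emeasure_eq_measure)
qed (use assms in \<open>auto simp: markov_kernel_of_def prob_space_imp_subprob_space\<close>)

lemma markov_kernel_of_bind_eq_distr_snd:
  assumes K: "markov_kernel_of M MA K" and sets_M: "sets M = sets (MA \<Otimes>\<^sub>M borel)"
    and "space MA \<noteq> {}"
  shows "MA \<bind> K = distr M borel snd"
proof (rule measure_eqI)
  have K_sub: "K \<in> MA \<rightarrow>\<^sub>M subprob_algebra borel"
    using K by (intro measurable_prob_algebraD markov_kernel_of_measurable)
  then show sets_eq: "sets (MA \<bind> K) = sets (distr M borel snd)"
    using \<open>space MA \<noteq> {}\<close> by (simp add: sets_kernel)
  fix F
  assume "F \<in> sets (MA \<bind> K)"
  then have F: "F \<in> sets borel"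
    using sets_eq by simp
  have space_M: "space M = space MA \<times> UNIV"
    using sets_eq_imp_space_eq[OF sets_M] by (simp add: space_pair_measure)
  have "emeasure (MA \<bind> K) F = (\<integral>\<^sup>+x. emeasure (K x) F \<partial>MA)"
    using \<open>space MA \<noteq> {}\<close> K_sub F by (rule emeasure_bind)
  also have "\<dots> = (\<integral>\<^sup>+x. emeasure (K x) F * indicator (space MA) x \<partial>MA)"
    by (intro nn_integral_cong) simp
  also have "\<dots> = emeasure M (space MA \<times> F)"
    using K F by (simp add: markov_kernel_of_def)
  also have "\<dots> = emeasure (distr M borel snd) F"
  proof -
    have "snd \<in> M \<rightarrow>\<^sub>M borel"
      unfolding measurable_cong_sets[OF sets_M refl] by (rule measurable_snd)
    with F space_M show ?thesis
      by (subst emeasure_distr) (auto simp: vimage_def Times_eq_cancel2 intro!: arg_cong[where f = "emeasure M"])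
  qed
  finally show "emeasure (MA \<bind> K) F = emeasure (distr M borel snd) F" .
qed

lemma unit_cube_eq_cbox: "unit_cube = cbox 0 (1 :: real^'n::finite)"
  by (auto simp: unit_cube_def mem_box_cart)

lemma uniform_mixture_of_copula:
  fixes MA :: "(real^'n::finite) measure"
  assumes "copula_measure MA" and "dcopula_measure MC" and "markov_kernel_of MC MA K"
  shows "uniform_mixture MA K"
proof (intro uniform_mixture.intro uniform_mixture_axioms.intro)
  have sets_MA: "sets MA = sets borel"
    using assms(1) by (simp add: copula_measure_def)
  have "sets MC = sets (borel \<Otimes>\<^sub>M (borel :: real measure))"
    using assms(2) by (subst borel_prod) (simp add: dcopula_measure_def)
  also have "\<dots> = sets (MA \<Otimes>\<^sub>M borel)"
    using sets_MA by (intro sets_pair_measure_cong) simp_all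
  finally have "MA \<bind> K = distr MC borel snd"
    using assms(3) by (intro markov_kernel_of_bind_eq_distr_snd) (simp_all add: sets_eq_imp_space_eq[OF sets_MA])
  then show "MA \<bind> K = uniform_measure lborel {0..1}"
    using assms(2) by (simp add: dcopula_measure_def)
  show "prob_space MA"
    using assms(1) by (simp add: copula_measure_def)
  show "K \<in> MA \<rightarrow>\<^sub>M prob_algebra borel"
    using assms(3) by (rule markov_kernel_of_measurable)
qed

theorem theorem12:
  fixes MA :: "(real^'n::finite) measure" and MC :: "((real^'n::finite) \<times> real) measure"
    and K :: "real^'n \<Rightarrow> real measure" and a :: real
  assumes "copula_measure MA"
    and "dcopula_measure MC"
    and "distr MC borel fst = MA"
    and "markov_kernel_of MC MA K"
    and "0 \<le> a" and "a \<le> 1/2"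
  shows "measure MA {x \<in> unit_cube. \<bar>regression K x - 1/2\<bar> \<ge> a} \<le> min 1 (2 - 4*a)"
proof -
  have sets_MA: "sets MA = sets borel"
    using assms(1) by (simp add: copula_measure_def)
  then have space_MA: "space MA = UNIV"
    using sets_eq_imp_space_eq by fastforce
  interpret uniform_mixture MA K
    using assms(1,2,4) by (rule uniform_mixture_of_copula)
  \<comment> \<open>\<open>distr MC borel fst = MA\<close> already follows from the disintegration, and for \<open>a < 0\<close> the
    bound is trivial.\<close>
  define upper where "upper = {x \<in> space MA. 1/2 + a \<le> regression K x} \<inter> unit_cube"
  define lower where "lower = {x \<in> space MA. regression K x \<le> 1/2 - a} \<inter> unit_cube"
  have "unit_cube \<in> sets MA"
    by (simp add: sets_MA unit_cube_eq_cbox)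
  then have sets: "upper \<in> sets MA" "lower \<in> sets MA"
    using borel_measurable_regression unfolding upper_def lower_def by measurable
  have "measure MA upper \<le> 1 - 2*a"
    using measure_regression_ge_le[OF sets(1), of "1/2 + a"] assms(6) by (simp add: upper_def)
  moreover have "measure MA lower \<le> 1 - 2*a"
    using measure_regression_le_le[OF sets(2), of "1/2 - a"] assms(6) by (simp add: lower_def)
  moreover have "{x \<in> unit_cube. \<bar>regression K x - 1/2\<bar> \<ge> a} = upper \<union> lower"
    by (auto simp: upper_def lower_def space_MA)
  ultimately show ?thesis
    using measure_Un_le[OF sets] prob_le_1 by simp
qed

end
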